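(* Let $f(x,y,z)=5x^2+7y^2+70z^2$. (i) If $n\in\mathbb{N}$ satisfies $n\equiv 1\pmod 4$, or $n\equiv 2\pmod 4$, or $n\equiv 4\pmod 8$, then $70n-2$ is represented by $f$ locally. (ii) If $n\in\mathbb{N}$ satisfies $n\equiv 3\pmod 4$ or $n\equiv 8\pmod{16}$, then $70n-32$ is represented by $f$ locally.
   Context: An integer $m$ is represented by $f$ locally if there exist $x,y,z\in\mathbb{R}$ with $f(x,y,z)=m$ and, for every prime $p$, there exist $x,y,z\in\mathbb{Z}_p$ (the $p$-adic integers) with $f(x,y,z)=m$. *)

theory Defs
  imports Complex_Main "HOL-Number_Theory.Cong"
begin

definition ff :: "'a::comm_ring_1 \<Rightarrow> 'a \<Rightarrow> 'a \<Rightarrow> 'a" where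
  "ff x y z = 5 * x^2 + 7 * y^2 + 70 * z^2"

text \<open>p-adic integers as the inverse limit of Z/p^k Z: a p-adic integer is a coherent
  sequence of residues a k in {0..p^k-1} with a (k+1) = a k mod p^k.\<close>
definition padic_int :: "nat \<Rightarrow> (nat \<Rightarrow> int) \<Rightarrow> bool" where
  "padic_int p a \<longleftrightarrow>
     (\<forall>k. 0 \<le> a k \<and> a k < int p ^ k \<and> [a (Suc k) = a k] (mod int p ^ k))"

definition padic_rep :: "nat \<Rightarrow> int \<Rightarrow> bool" where
  "padic_rep p m \<longleftrightarrow>
     (\<exists>x y z. padic_int p x \<and> padic_int p y \<and> padic_int p z \<and>
        (\<forall>k. [ff (x k) (y k) (z k) = m] (mod int p ^ k)))"

definition locally_represented :: "int \<Rightarrow> bool" where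
  "locally_represented m \<longleftrightarrow>
     (\<exists>x y z :: real. ff x y z = of_int m) \<and>
     (\<forall>p::nat. prime p \<longrightarrow> padic_rep p m)"

end

theory Submission
  imports Defs
begin

(* The real condition only asks for m \<ge> 0. At a prime p outside {2, 5, 7} the form is
   nondegenerate modulo p, so it represents every residue with a coordinate prime to p, and
   Hensel's lemma in that coordinate lifts the solution to Z_p. At p = 5 and p = 7 the number m
   is congruent to 7 y^2 resp. 5 x^2 with y resp. x prime to p, and the same lifting applies.
   At p = 2 Hensel's lemma needs a solution modulo 8 in the odd coefficient 5 (or in 35 after
   removing the factor 2 of 70 z^2), and the congruence conditions on n provide one. *)

definition padic_sq_solvable :: "nat \<Rightarrow> int \<Rightarrow> int \<Rightarrow> bool" where
  "padic_sq_solvable p a b \<longleftrightarrow>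
     (\<exists>s. \<forall>k. int p ^ k dvd s (Suc k) - s k \<and> int p ^ k dvd a * (s k)^2 - b)"

lemma padic_int_residues:
  assumes p: "p > 0" and coherent: "\<And>k. int p ^ k dvd s (Suc k) - s k"
  shows "padic_int p (\<lambda>k. s k mod int p ^ k)"
  unfolding padic_int_def
proof (intro allI conjI)
  fix k
  show "0 \<le> s k mod int p ^ k" and "s k mod int p ^ k < int p ^ k"
    using p by simp_all
  have "[s (Suc k) mod int p ^ Suc k = s (Suc k)] (mod int p ^ k)"
    by (rule cong_dvd_modulus[of _ _ "int p ^ Suc k"]) (simp_all add: cong_def)
  also have "[s (Suc k) = s k] (mod int p ^ k)"
    using coherent[of k] by (simp add: cong_iff_dvd_diff)
  also have "[s k = s k mod int p ^ k] (mod int p ^ k)"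
    by (simp add: cong_def)
  finally show "[s (Suc k) mod int p ^ Suc k = s k mod int p ^ k] (mod int p ^ k)" .
qed

lemma padic_rep_of_approximations:
  assumes p: "p > 0"
    and "\<And>k. int p ^ k dvd x (Suc k) - x k"
    and "\<And>k. int p ^ k dvd y (Suc k) - y k"
    and "\<And>k. int p ^ k dvd z (Suc k) - z k"
    and approx: "\<And>k. int p ^ k dvd ff (x k) (y k) (z k) - m"
  shows "padic_rep p m"
proof -
  have "[ff (x k mod int p ^ k) (y k mod int p ^ k) (z k mod int p ^ k) = m] (mod int p ^ k)"
    for k
  proof -
    have "[ff (x k mod int p ^ k) (y k mod int p ^ k) (z k mod int p ^ k)
            = ff (x k) (y k) (z k)] (mod int p ^ k)"
      unfolding ff_def by (intro cong_add cong_mult cong_pow cong_refl) simp_all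
    also have "[ff (x k) (y k) (z k) = m] (mod int p ^ k)"
      using approx[of k] by (simp add: cong_iff_dvd_diff)
    finally show ?thesis .
  qed
  moreover have "padic_int p (\<lambda>k. x k mod int p ^ k)" "padic_int p (\<lambda>k. y k mod int p ^ k)"
    "padic_int p (\<lambda>k. z k mod int p ^ k)"
    using assms padic_int_residues by simp_all
  ultimately show ?thesis
    unfolding padic_rep_def by blast
qed

lemma padic_rep_of_sq_solvable_x:
  assumes "p > 0" "padic_sq_solvable p 5 (m - 7 * y^2 - 70 * z^2)"
  shows "padic_rep p m"
proof -
  obtain s where s: "\<And>k. int p ^ k dvd s (Suc k) - s k \<and>
      int p ^ k dvd 5 * (s k)^2 - (m - 7 * y^2 - 70 * z^2)"
    using assms(2) unfolding padic_sq_solvable_def by blast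
  have "int p ^ k dvd ff (s k) y z - m" for k
  proof -
    have eq: "ff (s k) y z - m = 5 * (s k)^2 - (m - 7 * y^2 - 70 * z^2)"
      by (simp add: ff_def)
    show ?thesis
      unfolding eq using s[of k] by blast
  qed
  then show ?thesis
    using s by (intro padic_rep_of_approximations[OF \<open>p > 0\<close>, of s "\<lambda>_. y" "\<lambda>_. z"]) simp_all
qed

lemma padic_rep_of_sq_solvable_y:
  assumes "p > 0" "padic_sq_solvable p 7 (m - 5 * x^2 - 70 * z^2)"
  shows "padic_rep p m"
proof -
  obtain s where s: "\<And>k. int p ^ k dvd s (Suc k) - s k \<and>
      int p ^ k dvd 7 * (s k)^2 - (m - 5 * x^2 - 70 * z^2)"
    using assms(2) unfolding padic_sq_solvable_def by blast
  have "int p ^ k dvd ff x (s k) z - m" for k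
  proof -
    have eq: "ff x (s k) z - m = 7 * (s k)^2 - (m - 5 * x^2 - 70 * z^2)"
      by (simp add: ff_def)
    show ?thesis
      unfolding eq using s[of k] by blast
  qed
  then show ?thesis
    using s by (intro padic_rep_of_approximations[OF \<open>p > 0\<close>, of "\<lambda>_. x" s "\<lambda>_. z"]) simp_all
qed

lemma padic_rep_of_sq_solvable_z:
  assumes "p > 0" "padic_sq_solvable p 70 (m - 5 * x^2 - 7 * y^2)"
  shows "padic_rep p m"
proof -
  obtain s where s: "\<And>k. int p ^ k dvd s (Suc k) - s k \<and>
      int p ^ k dvd 70 * (s k)^2 - (m - 5 * x^2 - 7 * y^2)"
    using assms(2) unfolding padic_sq_solvable_def by blast
  have "int p ^ k dvd ff x y (s k) - m" for k
  proof -
    have eq: "ff x y (s k) - m = 70 * (s k)^2 - (m - 5 * x^2 - 7 * y^2)"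
      by (simp add: ff_def)
    show ?thesis
      unfolding eq using s[of k] by blast
  qed
  then show ?thesis
    using s by (intro padic_rep_of_approximations[OF \<open>p > 0\<close>, of "\<lambda>_. x" "\<lambda>_. y" s]) simp_all
qed

lemma padic_sq_solvable_mult:
  assumes "padic_sq_solvable p a b"
  shows "padic_sq_solvable p (c * a) (c * b)"
proof -
  obtain s where s: "\<And>k. int p ^ k dvd s (Suc k) - s k \<and> int p ^ k dvd a * (s k)^2 - b"
    using assms unfolding padic_sq_solvable_def by blast
  have "int p ^ k dvd c * a * (s k)^2 - c * b" for k
  proof -
    have "c * a * (s k)^2 - c * b = c * (a * (s k)^2 - b)"
      by (simp add: algebra_simps)
    then show ?thesis
      using s[of k] by simp
  qed
  then show ?thesis
    unfolding padic_sq_solvable_def using s by blast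
qed

lemma padic_rep_mult_square:
  assumes p: "p > 0" and "padic_rep p m"
  shows "padic_rep p (c^2 * m)"
proof -
  obtain x y z where xyz: "padic_int p x" "padic_int p y" "padic_int p z"
    and approx: "\<And>k. [ff (x k) (y k) (z k) = m] (mod int p ^ k)"
    using assms(2) unfolding padic_rep_def by blast
  have coherent: "int p ^ k dvd c * s (Suc k) - c * s k" if "padic_int p s" for s k
  proof -
    have "int p ^ k dvd s (Suc k) - s k"
      using that unfolding padic_int_def by (simp add: cong_iff_dvd_diff)
    then show ?thesis
      by (simp flip: right_diff_distrib)
  qed
  have "ff (c * x k) (c * y k) (c * z k) - c^2 * m = c^2 * (ff (x k) (y k) (z k) - m)" for k
    by (simp add: ff_def power_mult_distrib algebra_simps)
  moreover have "int p ^ k dvd ff (x k) (y k) (z k) - m" for k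
    using approx[of k] by (simp add: cong_iff_dvd_diff)
  ultimately show ?thesis
    using xyz coherent
    by (intro padic_rep_of_approximations[OF p, of "\<lambda>k. c * x k" "\<lambda>k. c * y k" "\<lambda>k. c * z k"])
       (simp_all add: dvd_mult)
qed

(* Modulo q^(K+1) the correction t' = t + q^K u changes a t^2 by the linear term 2 a t q^K u,
   and 2 a t is a unit modulo q. *)

lemma hensel_odd_step:
  fixes q a b t :: int
  assumes q: "prime q" "\<not> q dvd 2" "\<not> q dvd a" "\<not> q dvd t" and K: "K \<ge> 1"
    and approx: "q ^ K dvd a * t^2 - b"
  shows "\<exists>t'. q ^ Suc K dvd a * t'^2 - b \<and> \<not> q dvd t' \<and> q ^ K dvd t' - t"
proof -
  obtain w where w: "a * t^2 - b = q^K * w"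
    using approx by blast
  have "\<not> q dvd 2 * a * t"
    using q by (simp add: prime_dvd_mult_iff)
  then have "coprime (2 * a * t) q"
    using prime_imp_coprime[OF q(1)] coprime_commute by blast
  then obtain v where v: "[2 * a * t * v = 1] (mod q)"
    using cong_solve_coprime_int by blast
  define t' where "t' = t + q^K * (- w * v)"
  have expand: "a * t'^2 - b = q^K * (w - w * (2 * a * t * v)) + (q^K)^2 * (a * (w * v)^2)"
    using w by (simp add: t'_def power2_eq_square algebra_simps)
  have "[w - w * (2 * a * t * v) = w - w * 1] (mod q)"
    using v by (intro cong_diff cong_mult cong_refl)
  then have "q dvd w - w * (2 * a * t * v)"
    by (simp add: cong_0_iff)
  moreover have "q ^ Suc K dvd (q^K)^2"
  proof -
    have "q ^ Suc K dvd q ^ (K * 2)"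
      using K by (intro le_imp_power_dvd) simp
    then show ?thesis
      by (simp add: power_mult)
  qed
  ultimately have "q ^ Suc K dvd a * t'^2 - b"
    unfolding expand by (simp add: dvd_add dvd_mult2)
  moreover have "q dvd q^K * (- w * v)"
    using K by (simp add: dvd_power dvd_mult2)
  then have "\<not> q dvd t'"
    using q(4) dvd_add[of q t' "q^K * (w * v)"] by (auto simp: t'_def)
  moreover have "q ^ K dvd t' - t"
    by (simp add: t'_def)
  ultimately show ?thesis
    by blast
qed

lemma padic_sq_solvable_odd:
  assumes p: "prime p" "odd p" and a: "\<not> int p dvd a" and t: "\<not> int p dvd t"
    and root: "[a * t^2 = b] (mod int p)"
  shows "padic_sq_solvable p a b"
proof -
  define q where "q = int p"
  have "\<not> p dvd 2"
    using p primes_dvd_imp_eq[OF p(1) two_is_prime_nat] by auto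
  then have q: "prime q" "\<not> q dvd 2"
    using p(1) by (simp_all add: q_def flip: int_dvd_int_iff)
  define P where "P k t \<longleftrightarrow> q ^ Suc k dvd a * t^2 - b \<and> \<not> q dvd t" for k t
  have "\<exists>s. \<forall>k. P k (s k) \<and> q ^ Suc k dvd s (Suc k) - s k"
  proof (rule dependent_nat_choice)
    show "\<exists>t. P 0 t"
      using root t by (auto simp: P_def q_def cong_iff_dvd_diff)
    show "\<exists>t'. P (Suc k) t' \<and> q ^ Suc k dvd t' - t" if "P k t" for t k
    proof -
      have "\<not> q dvd t" "1 \<le> Suc k" "q ^ Suc k dvd a * t^2 - b"
        using that by (simp_all add: P_def)
      from hensel_odd_step[OF q a[folded q_def] this] show ?thesis
        unfolding P_def by blast
    qed
  qed
  then obtain s where s: "\<And>k. q ^ Suc k dvd a * (s k)^2 - b \<and> q ^ Suc k dvd s (Suc k) - s k"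
    unfolding P_def by blast
  have "q ^ k dvd q ^ Suc k" for k
    by simp
  then have "\<forall>k. q ^ k dvd s (Suc k) - s k \<and> q ^ k dvd a * (s k)^2 - b"
    using s dvd_trans by blast
  then show ?thesis
    unfolding padic_sq_solvable_def q_def by blast
qed

(* At p = 2 the derivative 2 a t is never a unit. Instead, for odd a t the correction
   t + 2^(j+2) changes a t^2 by 2^(j+3) a t modulo 2^(j+4), which cancels an odd cofactor of
   2^(j+3) in a t^2 - b. *)

lemma hensel_two_step:
  fixes a b t :: int
  assumes "odd a" "odd t" and approx: "2 ^ (j + 3) dvd a * t^2 - b"
  shows "\<exists>t'. 2 ^ (Suc j + 3) dvd a * t'^2 - b \<and> odd t' \<and> 2 ^ (j + 2) dvd t' - t"
proof -
  obtain w where w: "a * t^2 - b = 2^(j + 3) * w"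
    using approx by blast
  show ?thesis
  proof (cases "even w")
    case True
    then obtain e where "w = 2 * e"
      by blast
    then have "a * t^2 - b = 2^(Suc j + 3) * e"
      using w by (simp add: power_add)
    then have "2 ^ (Suc j + 3) dvd a * t^2 - b"
      by simp
    then show ?thesis
      using \<open>odd t\<close> by (intro exI[of _ t]) auto
  next
    case False
    define t' where "t' = t + 2^(j + 2)"
    have expand: "a * t'^2 - b = 2^(j + 3) * (w + a * t) + 2^(Suc j + 3) * (2^j * a)"
      using w by (simp add: t'_def power2_eq_square power_add algebra_simps)
    have "even (w + a * t)"
      using False assms by simp
    then obtain c where "w + a * t = 2 * c"
      by blast
    then have "2^(j + 3) * (w + a * t) = 2^(Suc j + 3) * c"
      by (simp add: power_add)
    then have "2 ^ (Suc j + 3) dvd 2^(j + 3) * (w + a * t)"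
      by simp
    then have "2 ^ (Suc j + 3) dvd a * t'^2 - b"
      unfolding expand by simp
    moreover have "odd t'" "2 ^ (j + 2) dvd t' - t"
      using assms by (simp_all add: t'_def)
    ultimately show ?thesis
      by blast
  qed
qed

lemma padic_sq_solvable_two:
  assumes a: "odd a" and root: "[a = b] (mod 8)"
  shows "padic_sq_solvable 2 a b"
proof -
  define P where "P k t \<longleftrightarrow> 2 ^ (k + 3) dvd a * t^2 - b \<and> odd t" for k t
  have "\<exists>s. \<forall>k. P k (s k) \<and> 2 ^ (k + 2) dvd s (Suc k) - s k"
  proof (rule dependent_nat_choice)
    show "\<exists>t. P 0 t"
      using root by (intro exI[of _ 1]) (simp add: P_def cong_iff_dvd_diff)
    show "\<exists>t'. P (Suc k) t' \<and> 2 ^ (k + 2) dvd t' - t" if "P k t" for t k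
      using hensel_two_step[OF a, of t k b] that unfolding P_def by blast
  qed
  then obtain s where s: "\<And>k. 2 ^ (k + 3) dvd a * (s k)^2 - b \<and> 2 ^ (k + 2) dvd s (Suc k) - s k"
    unfolding P_def by blast
  have "(2::int) ^ k dvd 2 ^ (k + j)" for k j
    by (simp add: le_imp_power_dvd)
  then have "\<forall>k. 2 ^ k dvd s (Suc k) - s k \<and> 2 ^ k dvd a * (s k)^2 - b"
    using s dvd_trans by blast
  then show ?thesis
    unfolding padic_sq_solvable_def of_nat_numeral by blast
qed

lemma square_mod_prime_inj:
  fixes q x y :: int
  assumes "prime q" "0 \<le> x" "2 * x < q" "0 \<le> y" "2 * y < q"
    and "q dvd x^2 - y^2"
  shows "x = y"
proof (rule ccontr)
  assume "x \<noteq> y"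
  have "x^2 - y^2 = (x - y) * (x + y)"
    by (simp add: power2_eq_square algebra_simps)
  then have "q dvd x - y \<or> q dvd x + y"
    using assms by (simp add: prime_dvd_mult_iff)
  moreover have "x - y \<noteq> 0" "x + y \<noteq> 0"
    using \<open>x \<noteq> y\<close> assms by linarith+
  ultimately have "\<bar>q\<bar> \<le> \<bar>x - y\<bar> \<or> \<bar>q\<bar> \<le> \<bar>x + y\<bar>"
    using dvd_imp_le_int by blast
  then show False
    using assms by linarith
qed

(* Pigeonhole: a x^2 and c - b y^2 each take (q + 1) / 2 distinct values modulo q as x and y
   range over 0, ..., (q - 1) / 2, so the two value sets meet. *)

lemma binary_form_represents_mod_prime:
  fixes q a b c :: int
  assumes q: "prime q" "odd q" and a: "\<not> q dvd a" and b: "\<not> q dvd b"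
  shows "\<exists>x y. [a * x^2 + b * y^2 = c] (mod q)"
proof (rule ccontr)
  assume none: "\<not> ?thesis"
  define h where "h = (q - 1) div 2"
  have q2: "q = 2 * h + 1"
    using q(2) by (simp add: h_def)
  define S where "S = {0..h}"
  have S_small: "0 \<le> x \<and> 2 * x < q" if "x \<in> S" for x
    using that q2 by (auto simp: S_def)
  define A where "A = (\<lambda>x. (a * x^2) mod q) ` S"
  define B where "B = (\<lambda>y. (c - b * y^2) mod q) ` S"
  have "inj_on (\<lambda>x. (a * x^2) mod q) S"
  proof (rule inj_onI)
    fix x y
    assume "x \<in> S" "y \<in> S" "(a * x^2) mod q = (a * y^2) mod q"
    then have "q dvd a * (x^2 - y^2)"
      by (simp add: mod_eq_dvd_iff right_diff_distrib)
    then show "x = y"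
      using square_mod_prime_inj[OF q(1)] S_small \<open>x \<in> S\<close> \<open>y \<in> S\<close> a q(1)
      by (simp add: prime_dvd_mult_iff)
  qed
  then have card_A: "card A = nat (h + 1)"
    by (simp add: A_def S_def card_image)
  have "inj_on (\<lambda>y. (c - b * y^2) mod q) S"
  proof (rule inj_onI)
    fix x y
    assume "x \<in> S" "y \<in> S" "(c - b * x^2) mod q = (c - b * y^2) mod q"
    then have "q dvd (- b) * (x^2 - y^2)"
      by (simp add: mod_eq_dvd_iff algebra_simps)
    then show "x = y"
      using square_mod_prime_inj[OF q(1)] S_small \<open>x \<in> S\<close> \<open>y \<in> S\<close> b q(1)
      by (simp add: prime_dvd_mult_iff)
  qed
  then have card_B: "card B = nat (h + 1)"
    by (simp add: B_def S_def card_image)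
  have "A \<inter> B = {}"
  proof -
    have "(a * x^2) mod q \<noteq> (c - b * y^2) mod q" for x y
    proof
      assume "(a * x^2) mod q = (c - b * y^2) mod q"
      then have "[a * x^2 + b * y^2 = (c - b * y^2) + b * y^2] (mod q)"
        by (intro cong_add cong_refl) (simp add: cong_def)
      then show False
        using none by simp
    qed
    then show ?thesis
      by (auto simp: A_def B_def)
  qed
  then have "card A + card B = card (A \<union> B)"
    by (simp add: card_Un_disjoint A_def B_def S_def)
  also have "\<dots> \<le> card {0..<q}"
    using prime_gt_1_int[OF q(1)] by (intro card_mono) (auto simp: A_def B_def)
  finally have "nat (h + 1) + nat (h + 1) \<le> nat q"
    using card_A card_B by simp
  then show False
    using q2 prime_gt_1_int[OF q(1)] by linarith
qed

lemma padic_rep_of_cong_x: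
  assumes p: "prime p" "odd p" and unit: "\<not> int p dvd 5 * x"
    and root: "[ff x y z = m] (mod int p)"
  shows "padic_rep p m"
proof -
  have "\<not> int p dvd 5" "\<not> int p dvd x"
    using unit by (auto intro: dvd_mult dvd_mult2)
  moreover have "[5 * x^2 = m - 7 * y^2 - 70 * z^2] (mod int p)"
    using root by (simp add: ff_def cong_iff_dvd_diff algebra_simps)
  ultimately have "padic_sq_solvable p 5 (m - 7 * y^2 - 70 * z^2)"
    by (rule padic_sq_solvable_odd[OF p])
  then show ?thesis
    using prime_gt_0_nat[OF p(1)] by (rule padic_rep_of_sq_solvable_x[rotated])
qed

lemma padic_rep_of_cong_y:
  assumes p: "prime p" "odd p" and unit: "\<not> int p dvd 7 * y"
    and root: "[ff x y z = m] (mod int p)"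
  shows "padic_rep p m"
proof -
  have "\<not> int p dvd 7" "\<not> int p dvd y"
    using unit by (auto intro: dvd_mult dvd_mult2)
  moreover have "[7 * y^2 = m - 5 * x^2 - 70 * z^2] (mod int p)"
    using root by (simp add: ff_def cong_iff_dvd_diff algebra_simps)
  ultimately have "padic_sq_solvable p 7 (m - 5 * x^2 - 70 * z^2)"
    by (rule padic_sq_solvable_odd[OF p])
  then show ?thesis
    using prime_gt_0_nat[OF p(1)] by (rule padic_rep_of_sq_solvable_y[rotated])
qed

lemma padic_rep_away_from_2_5_7:
  assumes p: "prime p" "p \<notin> {2, 5, 7}"
  shows "padic_rep p m"
proof -
  define q where "q = int p"
  have "p \<noteq> 2"
    using p(2) by simp
  with prime_ge_2_nat[OF p(1)] have "odd p"
    by (intro prime_odd_nat[OF p(1)]) linarith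
  have primes: "prime (2::nat)" "prime (5::nat)" "prime (7::nat)"
    by (simp_all add: prime_nat_iff' atLeastLessThan_nat_numeral)
  have "\<not> p dvd 2" "\<not> p dvd 5" "\<not> p dvd 7"
    using p primes_dvd_imp_eq[OF p(1) primes(1)] primes_dvd_imp_eq[OF p(1) primes(2)]
      primes_dvd_imp_eq[OF p(1) primes(3)] by auto
  moreover have "\<not> p dvd 2 * 5 * 7"
    using calculation by (simp only: prime_dvd_mult_iff[OF p(1)]) blast
  ultimately have "\<not> p dvd 5" "\<not> p dvd 7" "\<not> p dvd 70"
    by simp_all
  then have n5: "\<not> q dvd 5" and n7: "\<not> q dvd 7" and n70: "\<not> q dvd 70"
    unfolding q_def by (simp_all flip: int_dvd_int_iff)
  have "\<exists>z. \<not> q dvd m - 70 * z^2"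
  proof (cases "q dvd m")
    case True
    have "\<not> q dvd m - 70"
      using True n70 dvd_diff[of q m "m - 70"] by auto
    then show ?thesis
      by (intro exI[of _ 1]) simp
  next
    case False
    then show ?thesis
      by (intro exI[of _ 0]) simp
  qed
  then obtain z where z: "\<not> q dvd m - 70 * z^2"
    by blast
  have "prime q" "odd q"
    using p \<open>odd p\<close> by (simp_all add: q_def)
  then obtain x y where xy: "[5 * x^2 + 7 * y^2 = m - 70 * z^2] (mod q)"
    using binary_form_represents_mod_prime n5 n7 by blast
  then have root: "[ff x y z = m] (mod int p)"
    by (simp add: ff_def cong_iff_dvd_diff algebra_simps q_def)
  have "\<not> q dvd x \<or> \<not> q dvd y"
  proof (rule ccontr)
    assume "\<not> ?thesis"
    then have "q dvd x" "q dvd y"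
      by simp_all
    then have "q dvd 5 * x^2 + 7 * y^2"
      by (simp add: power2_eq_square)
    moreover have "q dvd 5 * x^2 + 7 * y^2 - (m - 70 * z^2)"
      using xy by (simp add: cong_iff_dvd_diff)
    ultimately have "q dvd (5 * x^2 + 7 * y^2) - (5 * x^2 + 7 * y^2 - (m - 70 * z^2))"
      by (rule dvd_diff)
    then have "q dvd m - 70 * z^2"
      by simp
    with z show False ..
  qed
  then show ?thesis
  proof
    assume "\<not> q dvd x"
    then have "\<not> int p dvd 5 * x"
      using \<open>prime q\<close> n5 by (simp add: q_def prime_dvd_mult_iff)
    then show ?thesis
      using padic_rep_of_cong_x[OF p(1) \<open>odd p\<close> _ root] by blast
  next
    assume "\<not> q dvd y"
    then have "\<not> int p dvd 7 * y"
      using \<open>prime q\<close> n7 by (simp add: q_def prime_dvd_mult_iff)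
    then show ?thesis
      using padic_rep_of_cong_y[OF p(1) \<open>odd p\<close> _ root] by blast
  qed
qed

lemma padic_rep_2_of_cong:
  assumes "[ff 1 y z = m] (mod 8)"
  shows "padic_rep 2 m"
proof -
  have "[5 = m - 7 * y^2 - 70 * z^2] (mod 8)"
    using assms by (simp add: ff_def cong_iff_dvd_diff algebra_simps)
  then show ?thesis
    by (intro padic_rep_of_sq_solvable_x[of 2 _ y z] padic_sq_solvable_two) simp_all
qed

lemma padic_rep_2_odd:
  assumes "odd m"
  shows "padic_rep 2 m"
proof -
  have "m mod 8 = 1 \<or> m mod 8 = 3 \<or> m mod 8 = 5 \<or> m mod 8 = 7"
    using assms by presburger
  then have "[ff 1 2 0 = m] (mod 8) \<or> [ff 1 0 1 = m] (mod 8) \<or> [ff 1 0 0 = m] (mod 8)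
      \<or> [ff 1 2 1 = m] (mod 8)"
    by (auto simp: ff_def cong_def)
  then show ?thesis
    using padic_rep_2_of_cong by blast
qed

lemma padic_rep_2_of_2_mod_8:
  assumes "m mod 8 = 2"
  shows "padic_rep 2 m"
  using assms by (intro padic_rep_2_of_cong[of 1 1]) (simp add: ff_def cong_def)

lemma padic_rep_2_of_6_mod_16:
  assumes "m mod 16 = 6"
  shows "padic_rep 2 m"
proof -
  define b where "b = m div 2"
  have m: "m = 2 * b" and root: "[35 = b] (mod 8)"
    using assms unfolding b_def cong_def by presburger+
  have "padic_sq_solvable 2 35 b"
    using root by (intro padic_sq_solvable_two) simp_all
  then have "padic_sq_solvable 2 (2 * 35) (2 * b)"
    by (rule padic_sq_solvable_mult)
  then have "padic_sq_solvable 2 70 (m - 5 * 0^2 - 7 * 0^2)"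
    by (simp add: m)
  then show ?thesis
    by (rule padic_rep_of_sq_solvable_z[rotated]) simp
qed

lemma padic_rep_5_of_nonresidue:
  assumes "m mod 5 \<in> {2, 3}"
  shows "padic_rep 5 m"
proof -
  have "prime (5::nat)"
    by (simp add: prime_nat_iff' atLeastLessThan_nat_numeral)
  moreover have "[ff 0 1 0 = m] (mod int 5) \<or> [ff 0 2 0 = m] (mod int 5)"
    using assms by (auto simp: ff_def cong_def)
  ultimately show ?thesis
    using padic_rep_of_cong_y[of 5 1 0 0 m] padic_rep_of_cong_y[of 5 2 0 0 m] by auto
qed

lemma padic_rep_7_of_nonresidue:
  assumes "m mod 7 \<in> {3, 5, 6}"
  shows "padic_rep 7 m"
proof -
  have "prime (7::nat)"
    by (simp add: prime_nat_iff' atLeastLessThan_nat_numeral)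
  moreover have "[ff 1 0 0 = m] (mod int 7) \<or> [ff 2 0 0 = m] (mod int 7)
      \<or> [ff 3 0 0 = m] (mod int 7)"
    using assms by (auto simp: ff_def cong_def)
  ultimately show ?thesis
    using padic_rep_of_cong_x[of 7 1 0 0 m] padic_rep_of_cong_x[of 7 2 0 0 m]
      padic_rep_of_cong_x[of 7 3 0 0 m] by auto
qed

lemma ff_real_represents_nonneg:
  assumes "0 \<le> r"
  shows "\<exists>x y z :: real. ff x y z = r"
proof -
  have "ff (sqrt (r / 5)) 0 0 = r"
    using assms by (simp add: ff_def)
  then show ?thesis
    by blast
qed

lemma locally_represented_of_padic_rep_2_5_7:
  assumes "0 \<le> m" "padic_rep 2 m" "padic_rep 5 m" "padic_rep 7 m"
  shows "locally_represented m"
  unfolding locally_represented_def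
  using assms ff_real_represents_nonneg[of "of_int m"] padic_rep_away_from_2_5_7 by auto

lemma mod_eq_of_eq_add_mult:
  fixes m r k j :: int
  assumes "m = r + k * j" "0 \<le> r" "r < k"
  shows "m mod k = r"
  using assms by simp

lemma nat_eq_mult_div_add_mod:
  fixes n k r :: nat
  assumes "n mod k = r"
  shows "n = k * (n div k) + r"
  using assms div_mult_mod_eq[of n k] by (simp add: mult.commute)

lemma padic_rep_2_70n_minus_2:
  fixes n :: nat
  assumes "n mod 4 = 1 \<or> n mod 4 = 2 \<or> n mod 8 = 4"
  shows "padic_rep 2 (70 * int n - 2)"
  using assms
proof (elim disjE)
  assume "n mod 4 = 1"
  then have "70 * int n - 2 = 2^2 * (70 * int (n div 4) + 17)"
    by (subst nat_eq_mult_div_add_mod[of n 4 1]) simp_all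
  moreover have "padic_rep 2 (2^2 * (70 * int (n div 4) + 17))"
    by (intro padic_rep_mult_square padic_rep_2_odd) simp_all
  ultimately show ?thesis
    by (simp only:)
next
  assume "n mod 4 = 2"
  then have "(70 * int n - 2) mod 8 = 2"
    by (intro mod_eq_of_eq_add_mult[where j = "35 * int (n div 4) + 17"])
       (subst nat_eq_mult_div_add_mod[of n 4 2], simp_all)
  then show ?thesis
    by (rule padic_rep_2_of_2_mod_8)
next
  assume "n mod 8 = 4"
  then have "(70 * int n - 2) mod 16 = 6"
    by (intro mod_eq_of_eq_add_mult[where j = "35 * int (n div 8) + 17"])
       (subst nat_eq_mult_div_add_mod[of n 8 4], simp_all)
  then show ?thesis
    by (rule padic_rep_2_of_6_mod_16)
qed

lemma padic_rep_2_70n_minus_32: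
  fixes n :: nat
  assumes "n mod 4 = 3 \<or> n mod 16 = 8"
  shows "padic_rep 2 (70 * int n - 32)"
  using assms
proof (elim disjE)
  assume "n mod 4 = 3"
  then have "(70 * int n - 32) mod 8 = 2"
    by (intro mod_eq_of_eq_add_mult[where j = "35 * int (n div 4) + 22"])
       (subst nat_eq_mult_div_add_mod[of n 4 3], simp_all)
  then show ?thesis
    by (rule padic_rep_2_of_2_mod_8)
next
  assume "n mod 16 = 8"
  then have "70 * int n - 32 = 4^2 * (70 * int (n div 16) + 33)"
    by (subst nat_eq_mult_div_add_mod[of n 16 8]) simp_all
  moreover have "padic_rep 2 (4^2 * (70 * int (n div 16) + 33))"
    by (intro padic_rep_mult_square padic_rep_2_odd) simp_all
  ultimately show ?thesis
    by (simp only:)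
qed

theorem lemma4p1:
  fixes n :: nat
  shows "(n mod 4 = 1 \<or> n mod 4 = 2 \<or> n mod 8 = 4 \<longrightarrow>
            locally_represented (70 * int n - 2))
       \<and> (n mod 4 = 3 \<or> n mod 16 = 8 \<longrightarrow>
            locally_represented (70 * int n - 32))"
proof (intro conjI impI)
  have mod_5: "(70 * int n - 2) mod 5 = 3" "(70 * int n - 32) mod 5 = 3"
    by (intro mod_eq_of_eq_add_mult[where j = "14 * int n - 1"], simp_all)
       (intro mod_eq_of_eq_add_mult[where j = "14 * int n - 7"], simp_all)
  have mod_7: "(70 * int n - 2) mod 7 = 5" "(70 * int n - 32) mod 7 = 3"
    by (intro mod_eq_of_eq_add_mult[where j = "10 * int n - 1"], simp_all)
       (intro mod_eq_of_eq_add_mult[where j = "10 * int n - 5"], simp_all)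
  show "locally_represented (70 * int n - 2)" if "n mod 4 = 1 \<or> n mod 4 = 2 \<or> n mod 8 = 4"
    using that mod_5 mod_7
    by (intro locally_represented_of_padic_rep_2_5_7 padic_rep_2_70n_minus_2 padic_rep_5_of_nonresidue
        padic_rep_7_of_nonresidue) auto
  show "locally_represented (70 * int n - 32)" if "n mod 4 = 3 \<or> n mod 16 = 8"
    using that mod_5 mod_7
    by (intro locally_represented_of_padic_rep_2_5_7 padic_rep_2_70n_minus_32 padic_rep_5_of_nonresidue
        padic_rep_7_of_nonresidue) auto
qed

end
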